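(* Let $\mathcal{V}$ be a set of $n\ge 2$ vertices, let $\mathcal{C}$ be a fixed partition of $\mathcal{V}$ into communities, and let $Q_a(\mathcal{C})$ denote, for an attributed graph $G$ on vertex set $\mathcal{V}$, the modularity of $\mathcal{C}$ in the auxiliary graph $G_a$ of $G$ (defined in the context). Then every attributed graph $G$ on $\mathcal{V}$ satisfies $$LS_{Q_a(\mathcal{C})}(G)=\max_{G'\sim_{at}G}\bigl|Q_a(\mathcal{C})(G)-Q_a(\mathcal{C})(G')\bigr|\le \frac{60}{n}.$$
   Context: An attributed graph is a triple $G=(\mathcal{V},\mathcal{E},X)$ with $\mathcal{V}=\{v_1,\dots,v_n\}$, $\mathcal{E}$ a set of undirected edges, and $X$ a binary $n\times k$ matrix whose $i$-th row $\tau(v_i)\in\{0,1\}^k$ is the attribute vector of $v_i$. Two attributed graphs $G=(\mathcal{V},\mathcal{E},X)$ and $G'=(\mathcal{V},\mathcal{E}',X')$ on the same vertex set are neighbouring, $G\sim_{at}G'$, iff either $|\mathcal{E}\,\triangle\,\mathcal{E}'|=1$ (and the attributes coincide), or they have the same edges and differ in the attribute vector of exactly one vertex. For a graph $H$ with $m\ge1$ edges and a partition $\mathcal{C}$ of its vertices, the modularity is $\sum_{C\in\mathcal{C}}\bigl(\frac{\ell_C}{m}-(\frac{d_C}{2m})^2\bigr)$, where $\ell_C$ is the number of edges with both ends in $C$ and $d_C$ the sum of degrees of the vertices of $C$. The auxiliary graph $G_a$ of an attributed graph $G$ has vertex set $\mathcal{V}$ and its edges are the $\lceil n(n-1)/20\rceil$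 pairs of distinct vertices whose attribute vectors have the largest cosine similarity (ties broken by a fixed rule). The local sensitivity $LS_q(G)$ of a real-valued query $q$ at $G$ is $\max_{G'\sim_{at}G}|q(G)-q(G')|$. *)

theory Defs
  imports Complex_Main "HOL-Library.Disjoint_Sets"
begin

definition pairs :: "'v set \<Rightarrow> 'v set set" where
  "pairs V = {e. e \<subseteq> V \<and> card e = 2}"

text \<open>An attributed graph on V with k binary attributes: edge set E and attribute
  map X, where X v i is the i-th attribute of v (i < k); junk values are fixed to False.\<close>
definition attr_graph :: "'v set \<Rightarrow> nat \<Rightarrow> 'v set set \<Rightarrow> ('v \<Rightarrow> nat \<Rightarrow> bool) \<Rightarrow> bool" where
  "attr_graph V k E X \<longleftrightarrow> E \<subseteq> pairs V \<and> (\<forall>v i. (v \<notin> V \<or> k \<le> i) \<longrightarrow> \<not> X v i)"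

text \<open>Cosine similarity of the binary attribute vectors of u and v
  (equal to 0 if one of them is the zero vector, since x / 0 = 0).\<close>
definition cos_sim :: "nat \<Rightarrow> ('v \<Rightarrow> nat \<Rightarrow> bool) \<Rightarrow> 'v \<Rightarrow> 'v \<Rightarrow> real" where
  "cos_sim k X u v =
     real (card {i\<in>{..<k}. X u i \<and> X v i}) /
       (sqrt (real (card {i\<in>{..<k}. X u i})) * sqrt (real (card {i\<in>{..<k}. X v i})))"

definition pair_sim :: "nat \<Rightarrow> ('v \<Rightarrow> nat \<Rightarrow> bool) \<Rightarrow> 'v set \<Rightarrow> real" where
  "pair_sim k X e =
     (let u = (SOME u. u \<in> e); w = (SOME w. w \<in> e \<and> w \<noteq> u) in cos_sim k X u w)"

definition aux_size :: "nat \<Rightarrow> nat" where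
  "aux_size n = nat \<lceil>real (n * (n - 1)) / 20\<rceil>"

text \<open>Auxiliary graph: the aux_size n pairs of largest cosine similarity; ties are broken
  by a fixed injective ranking rk of the pairs (smaller rank wins).\<close>
definition aux_edges :: "'v set \<Rightarrow> nat \<Rightarrow> ('v set \<Rightarrow> nat) \<Rightarrow> ('v \<Rightarrow> nat \<Rightarrow> bool) \<Rightarrow> 'v set set" where
  "aux_edges V k rk X =
     {e \<in> pairs V. card {f \<in> pairs V. pair_sim k X f > pair_sim k X e \<or>
                       (pair_sim k X f = pair_sim k X e \<and> rk f < rk e)} < aux_size (card V)}"

definition degree :: "'v set set \<Rightarrow> 'v \<Rightarrow> nat" where
  "degree E v = card {e \<in> E. v \<in> e}"

definition modularity :: "'v set set \<Rightarrow> 'v set set \<Rightarrow> real" where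
  "modularity E C =
     (\<Sum>c\<in>C. real (card {e \<in> E. e \<subseteq> c}) / real (card E)
              - (real (\<Sum>v\<in>c. degree E v) / (2 * real (card E)))^2)"

definition Q_aux :: "'v set \<Rightarrow> nat \<Rightarrow> ('v set \<Rightarrow> nat) \<Rightarrow> 'v set set
                     \<Rightarrow> 'v set set \<times> ('v \<Rightarrow> nat \<Rightarrow> bool) \<Rightarrow> real" where
  "Q_aux V k rk C G = modularity (aux_edges V k rk (snd G)) C"

definition neighbouring :: "'v set \<Rightarrow> nat \<Rightarrow> 'v set set \<times> ('v \<Rightarrow> nat \<Rightarrow> bool)
                              \<Rightarrow> 'v set set \<times> ('v \<Rightarrow> nat \<Rightarrow> bool) \<Rightarrow> bool" where
  "neighbouring V k G G' \<longleftrightarrow>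
     attr_graph V k (fst G) (snd G) \<and> attr_graph V k (fst G') (snd G') \<and>
     ((card ((fst G - fst G') \<union> (fst G' - fst G)) = 1 \<and> snd G = snd G') \<or>
      (fst G = fst G' \<and> (\<exists>v\<in>V. snd G' v \<noteq> snd G v \<and> (\<forall>u. u \<noteq> v \<longrightarrow> snd G' u = snd G u))))"

definition local_sensitivity :: "('g \<Rightarrow> real) \<Rightarrow> ('g \<Rightarrow> 'g \<Rightarrow> bool) \<Rightarrow> 'g \<Rightarrow> real" where
  "local_sensitivity q nbr G = Sup {\<bar>q G - q G'\<bar> | G'. nbr G G'}"

end

theory Submission
  imports Defs
begin

text \<open>Q_a depends on the attributes only, and changing the attributes of one vertex v changes
  the cosine similarity of just the n - 1 pairs through v. The auxiliary graph keeps the top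
  m = ceil(n(n-1)/20) pairs of a strict total order, so at most n - 1 of its edges are exchanged
  for as many others. Exchanging r of the m edges of a graph moves the modularity of a fixed
  partition by at most 3r/m, which gives 3(n-1)/m \<le> 60/n.\<close>

definition outranks :: "('a \<Rightarrow> 'b::linorder) \<Rightarrow> ('a \<Rightarrow> nat) \<Rightarrow> 'a \<Rightarrow> 'a \<Rightarrow> bool" where
  "outranks s rk f e \<longleftrightarrow> s e < s f \<or> (s f = s e \<and> rk f < rk e)"

definition rank :: "('a \<Rightarrow> 'b::linorder) \<Rightarrow> ('a \<Rightarrow> nat) \<Rightarrow> 'a set \<Rightarrow> 'a \<Rightarrow> nat" where
  "rank s rk S e = card {f \<in> S. outranks s rk f e}"

definition top_ranked :: "('a \<Rightarrow> 'b::linorder) \<Rightarrow> ('a \<Rightarrow> nat) \<Rightarrow> 'a set \<Rightarrow> nat \<Rightarrow> 'a set" where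
  "top_ranked s rk S m = {e \<in> S. rank s rk S e < m}"

lemma outranks_trans: "outranks s rk g f \<Longrightarrow> outranks s rk f e \<Longrightarrow> outranks s rk g e"
  unfolding outranks_def by auto

lemma outranks_irrefl: "\<not> outranks s rk e e"
  unfolding outranks_def by auto

lemma outranks_total:
  assumes "inj_on rk S" "e \<in> S" "f \<in> S" "e \<noteq> f"
  shows "outranks s rk e f \<or> outranks s rk f e"
proof -
  have "rk e \<noteq> rk f" using assms inj_on_eq_iff by metis
  then show ?thesis unfolding outranks_def by auto
qed

lemma outranks_cong: "s' e = s e \<Longrightarrow> s' f = s f \<Longrightarrow> outranks s' rk e f = outranks s rk e f"
  unfolding outranks_def by simp

lemma rank_less_rank:
  assumes "finite S" "f \<in> S" "outranks s rk f e"
  shows "rank s rk S f < rank s rk S e"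
  unfolding rank_def
proof (rule psubset_card_mono)
  show "{g \<in> S. outranks s rk g f} \<subset> {g \<in> S. outranks s rk g e}"
    using assms outranks_trans[of s rk _ f e] outranks_irrefl[of s rk f] by blast
qed (use assms in simp)

lemma rank_less_card: "finite S \<Longrightarrow> e \<in> S \<Longrightarrow> rank s rk S e < card S"
  unfolding rank_def using outranks_irrefl[of s rk e] by (intro psubset_card_mono) auto

lemma bij_betw_rank:
  assumes "finite S" "inj_on rk S"
  shows "bij_betw (rank s rk S) S {..<card S}"
proof -
  have inj: "inj_on (rank s rk S) S"
  proof (rule inj_onI, rule ccontr)
    fix e f assume "e \<in> S" "f \<in> S" "rank s rk S e = rank s rk S f" "e \<noteq> f"
    then show False
      using outranks_total[OF assms(2), of e f s] rank_less_rank[OF assms(1)] by fastforce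
  qed
  moreover have "rank s rk S ` S = {..<card S}"
  proof (rule card_subset_eq)
    show "rank s rk S ` S \<subseteq> {..<card S}" using rank_less_card[OF assms(1)] by auto
    show "card (rank s rk S ` S) = card {..<card S}" using card_image[OF inj] by simp
  qed simp
  ultimately show ?thesis unfolding bij_betw_def ..
qed

lemma card_top_ranked:
  assumes "finite S" "inj_on rk S" "m \<le> card S"
  shows "card (top_ranked s rk S m) = m"
proof -
  have bij: "bij_betw (rank s rk S) S {..<card S}" by (rule bij_betw_rank[OF assms(1,2)])
  have "rank s rk S ` top_ranked s rk S m = rank s rk S ` S \<inter> {..<m}"
    unfolding top_ranked_def by auto
  also have "\<dots> = {..<m}" using bij assms(3) unfolding bij_betw_def by auto
  finally have "rank s rk S ` top_ranked s rk S m = {..<m}" .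
  moreover have "inj_on (rank s rk S) (top_ranked s rk S m)"
    using bij_betw_imp_inj_on[OF bij] by (rule inj_on_subset) (auto simp: top_ranked_def)
  ultimately show ?thesis by (metis card_image card_lessThan)
qed

lemma outranks_in_top_ranked:
  assumes "finite S" "e \<in> top_ranked s rk S m" "f \<in> S" "outranks s rk f e"
  shows "f \<in> top_ranked s rk S m"
  using assms rank_less_rank[OF assms(1,3,4)] unfolding top_ranked_def by simp

text \<open>Both selections have m elements, so A - B and B - A have equal size; and they cannot
  both contain an element outside T, since s and s' order any two such elements alike.\<close>
lemma card_top_ranked_diff_le:
  assumes S: "finite S" "inj_on rk S" "m \<le> card S"
    and agree: "\<forall>e \<in> S - T. s' e = s e"
  shows "card (top_ranked s rk S m - top_ranked s' rk S m) \<le> card (S \<inter> T)"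
proof -
  define A where "A = top_ranked s rk S m"
  define B where "B = top_ranked s' rk S m"
  have AB: "A \<subseteq> S" "B \<subseteq> S" unfolding A_def B_def top_ranked_def by auto
  have fin: "finite A" "finite B" using AB S(1) finite_subset by auto
  have "card A = card B" unfolding A_def B_def card_top_ranked[OF S] ..
  then have card_eq: "card (A - B) = card (B - A)"
    using fin by (simp add: card_Diff_subset_Int Int_commute)
  have "A - B \<subseteq> T \<or> B - A \<subseteq> T"
  proof (rule ccontr)
    assume "\<not> ?thesis"
    then obtain e f where e: "e \<in> A" "e \<notin> B" "e \<notin> T" and f: "f \<in> B" "f \<notin> A" "f \<notin> T"
      by blast
    have "e \<in> S" "f \<in> S" "e \<noteq> f" using e f AB by auto
    then have "outranks s rk e f \<or> outranks s rk f e" by (rule outranks_total[OF S(2)])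
    moreover have "outranks s' rk e f = outranks s rk e f"
      using agree \<open>e \<in> S\<close> \<open>f \<in> S\<close> e f by (intro outranks_cong) auto
    ultimately show False
      using outranks_in_top_ranked[OF S(1)] e f \<open>e \<in> S\<close> \<open>f \<in> S\<close> unfolding A_def B_def by blast
  qed
  then have "card (A - B) \<le> card (S \<inter> T)"
  proof
    assume "A - B \<subseteq> T"
    then show ?thesis using AB S(1) by (intro card_mono) auto
  next
    assume "B - A \<subseteq> T"
    then show ?thesis unfolding card_eq using AB S(1) by (intro card_mono) auto
  qed
  then show ?thesis unfolding A_def B_def .
qed

definition internal_edges :: "'v set set \<Rightarrow> 'v set \<Rightarrow> nat" where
  "internal_edges F c = card {e \<in> F. e \<subseteq> c}"

definition volume :: "'v set set \<Rightarrow> 'v set \<Rightarrow> nat" where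
  "volume F c = (\<Sum>v\<in>c. degree F v)"

lemma modularity_altdef:
  "modularity F C =
     (\<Sum>c\<in>C. real (internal_edges F c) / real (card F) - (real (volume F c) / (2 * real (card F)))^2)"
  unfolding modularity_def internal_edges_def volume_def ..

lemma finite_pairs: "finite V \<Longrightarrow> finite (pairs V)"
  unfolding pairs_def by simp

lemma card_pairs: "finite V \<Longrightarrow> card (pairs V) = card V choose 2"
  unfolding pairs_def by (rule n_subsets)

lemma card_pairs_containing_le:
  assumes "finite V" "v \<in> V"
  shows "card {e \<in> pairs V. v \<in> e} \<le> card V - 1"
proof -
  have "{e \<in> pairs V. v \<in> e} \<subseteq> (\<lambda>u. {v, u}) ` (V - {v})"
  proof
    fix e assume "e \<in> {e \<in> pairs V. v \<in> e}"
    then have e: "e \<subseteq> V" "card e = 2" "v \<in> e" unfolding pairs_def by auto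
    then have "card (e - {v}) = 1" by simp
    then obtain u where "e - {v} = {u}" by (rule card_1_singletonE)
    then show "e \<in> (\<lambda>u. {v, u}) ` (V - {v})" using e by blast
  qed
  then have "card {e \<in> pairs V. v \<in> e} \<le> card ((\<lambda>u. {v, u}) ` (V - {v}))"
    using assms(1) by (intro card_mono) auto
  also have "\<dots> \<le> card (V - {v})" by (rule card_image_le) (use assms(1) in simp)
  finally show ?thesis using assms by simp
qed

lemma degree_Un:
  "finite F \<Longrightarrow> finite G \<Longrightarrow> F \<inter> G = {} \<Longrightarrow> degree (F \<union> G) v = degree F v + degree G v"
  unfolding degree_def by (subst card_Un_disjoint[symmetric]) (auto intro: arg_cong[where f = card])

lemma volume_Un:
  "finite F \<Longrightarrow> finite G \<Longrightarrow> F \<inter> G = {} \<Longrightarrow> volume (F \<union> G) c = volume F c + volume G c"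
  unfolding volume_def by (simp add: degree_Un sum.distrib)

lemma internal_edges_Un:
  "finite F \<Longrightarrow> finite G \<Longrightarrow> F \<inter> G = {} \<Longrightarrow>
     internal_edges (F \<union> G) c = internal_edges F c + internal_edges G c"
  unfolding internal_edges_def by (subst card_Un_disjoint[symmetric]) (auto intro: arg_cong[where f = card])

lemma sum_volume_partition:
  assumes "finite V" "partition_on V C" "F \<subseteq> pairs V"
  shows "(\<Sum>c\<in>C. volume F c) = 2 * card F"
proof -
  have finF: "finite F" using assms(1,3) finite_pairs finite_subset by blast
  have V: "V = \<Union>C" by (rule partition_onD1[OF assms(2)])
  have "(\<Sum>c\<in>C. volume F c) = (\<Sum>v\<in>V. degree F v)"
  proof -
    have "\<forall>c\<in>C. finite c" using assms(1) V by (metis Union_upper finite_subset)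
    moreover have "\<forall>c\<in>C. \<forall>c'\<in>C. c \<noteq> c' \<longrightarrow> c \<inter> c' = {}"
      using partition_onD2[OF assms(2)] by (simp add: disjoint_def)
    ultimately show ?thesis unfolding volume_def V by (simp add: sum.Union_disjoint)
  qed
  also have "\<dots> = (\<Sum>v\<in>V. \<Sum>e\<in>F. if v \<in> e then 1 else 0)"
    unfolding degree_def using finF by (simp add: sum.If_cases Int_def)
  also have "\<dots> = (\<Sum>e\<in>F. \<Sum>v\<in>V. if v \<in> e then 1 else 0)"
    by (rule sum.swap)
  also have "\<dots> = (\<Sum>e\<in>F. card e)"
  proof (rule sum.cong)
    fix e assume "e \<in> F"
    then have "e \<subseteq> V" using assms(3) unfolding pairs_def by blast
    then show "(\<Sum>v\<in>V. if v \<in> e then 1 else 0) = card e"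
      using assms(1) by (simp add: sum.If_cases Int_absorb1)
  qed simp
  also have "\<dots> = (\<Sum>e\<in>F. 2)"
    using assms(3) unfolding pairs_def by (intro sum.cong) auto
  finally show ?thesis by simp
qed

lemma volume_le:
  assumes "finite V" "partition_on V C" "F \<subseteq> pairs V" "c \<in> C"
  shows "volume F c \<le> 2 * card F"
  using member_le_sum[of c C "volume F"] sum_volume_partition[OF assms(1-3)] assms(4)
    finite_elements[OF assms(1,2)] by simp

lemma sum_internal_edges_partition_le:
  assumes "finite V" "partition_on V C" "F \<subseteq> pairs V"
  shows "(\<Sum>c\<in>C. internal_edges F c) \<le> card F"
proof -
  have fin: "finite F" using assms(1,3) finite_pairs finite_subset by blast
  have nonempty: "e \<noteq> {}" if "e \<in> F" for e using that assms(3) unfolding pairs_def by auto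
  have "(\<Sum>c\<in>C. internal_edges F c) = card (\<Union>c\<in>C. {e \<in> F. e \<subseteq> c})"
    unfolding internal_edges_def
  proof (rule card_UN_disjoint[symmetric])
    show "finite C" by (rule finite_elements[OF assms(1,2)])
    show "\<forall>c\<in>C. \<forall>c'\<in>C. c \<noteq> c' \<longrightarrow> {e \<in> F. e \<subseteq> c} \<inter> {e \<in> F. e \<subseteq> c'} = {}"
    proof (intro ballI impI)
      fix c c' assume "c \<in> C" "c' \<in> C" "c \<noteq> c'"
      then have "c \<inter> c' = {}" using partition_onD2[OF assms(2)] by (simp add: disjoint_def)
      then show "{e \<in> F. e \<subseteq> c} \<inter> {e \<in> F. e \<subseteq> c'} = {}" using nonempty by blast
    qed
  qed (use fin in simp)
  also have "\<dots> \<le> card F" using fin by (intro card_mono) auto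
  finally show ?thesis .
qed

lemma modularity_term_diff:
  fixes m k a b d p q :: real
  shows "((k + a) / m - ((d + p) / (2 * m))^2) - ((k + b) / m - ((d + q) / (2 * m))^2)
     = (a - b) / m - (p - q) * ((d + p) + (d + q)) / (4 * m^2)"
  by (cases "m = 0") (simp_all add: power_divide power2_eq_square field_simps)

lemma modularity_diff_eq:
  assumes "finite E" "finite E'" "card E = card E'"
  shows "modularity E C - modularity E' C =
    (\<Sum>c\<in>C. (real (internal_edges (E - E') c) - real (internal_edges (E' - E) c)) / real (card E)
      - (real (volume (E - E') c) - real (volume (E' - E) c)) * real (volume E c + volume E' c)
          / (4 * real (card E)^2))"
proof -
  have E: "(E \<inter> E') \<union> (E - E') = E" "(E \<inter> E') \<inter> (E - E') = {}"
    and E': "(E \<inter> E') \<union> (E' - E) = E'" "(E \<inter> E') \<inter> (E' - E) = {}" by blast+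
  have "internal_edges E c = internal_edges (E \<inter> E') c + internal_edges (E - E') c"
       "internal_edges E' c = internal_edges (E \<inter> E') c + internal_edges (E' - E) c"
       "volume E c = volume (E \<inter> E') c + volume (E - E') c"
       "volume E' c = volume (E \<inter> E') c + volume (E' - E) c" for c
    using internal_edges_Un[of "E \<inter> E'" "E - E'" c] internal_edges_Un[of "E \<inter> E'" "E' - E" c]
      volume_Un[of "E \<inter> E'" "E - E'" c] volume_Un[of "E \<inter> E'" "E' - E" c] assms(1,2)
    unfolding E E' by simp_all
  then show ?thesis
    unfolding modularity_altdef assms(3) sum_subtractf[symmetric]
    by (intro sum.cong) (simp_all only: of_nat_add modularity_term_diff)
qed

lemma sum_volume_weighted_le:
  assumes "finite V" "partition_on V C" "F \<subseteq> pairs V" "\<forall>c\<in>C. 0 \<le> w c \<and> w c \<le> M"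
  shows "0 \<le> (\<Sum>c\<in>C. real (volume F c) * w c)"
    and "(\<Sum>c\<in>C. real (volume F c) * w c) \<le> 2 * real (card F) * M"
proof -
  show "0 \<le> (\<Sum>c\<in>C. real (volume F c) * w c)" using assms(4) by (simp add: sum_nonneg)
  have "(\<Sum>c\<in>C. real (volume F c) * w c) \<le> (\<Sum>c\<in>C. real (volume F c) * M)"
    using assms(4) by (intro sum_mono mult_left_mono) auto
  also have "\<dots> = real (\<Sum>c\<in>C. volume F c) * M" by (simp add: sum_distrib_right)
  also have "\<dots> = 2 * real (card F) * M" using sum_volume_partition[OF assms(1-3)] by simp
  finally show "(\<Sum>c\<in>C. real (volume F c) * w c) \<le> 2 * real (card F) * M" .
qed

text \<open>The bound is 3t/m rather than the naive 6t/m because the removed and the added edges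
  enter with opposite signs, and each of their contributions lies between 0 and its maximum.\<close>
lemma modularity_diff_le:
  assumes V: "finite V" "partition_on V C" and E: "E \<subseteq> pairs V" "E' \<subseteq> pairs V"
    and same_card: "card E = card E'" and t: "card (E - E') \<le> t"
  shows "\<bar>modularity E C - modularity E' C\<bar> \<le> 3 * real t / real (card E)"
proof -
  define m where "m = real (card E)"
  define r where "r = card (E - E')"
  have fin: "finite E" "finite E'" using V E finite_pairs finite_subset by blast+
  have r': "card (E' - E) = r"
    using fin same_card unfolding r_def by (simp add: card_Diff_subset_Int Int_commute)
  have R: "E - E' \<subseteq> pairs V" "E' - E \<subseteq> pairs V" using E by blast+
  define w where "w c = real (volume E c + volume E' c)" for c
  have w: "\<forall>c\<in>C. 0 \<le> w c \<and> w c \<le> 4 * m"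
  proof
    fix c assume "c \<in> C"
    then have "volume E c + volume E' c \<le> 4 * card E"
      using volume_le[OF V E(1)] volume_le[OF V E(2)] same_card by fastforce
    then have "real (volume E c + volume E' c) \<le> real (4 * card E)" by (simp only: of_nat_le_iff)
    then show "0 \<le> w c \<and> w c \<le> 4 * m" unfolding w_def m_def by simp
  qed
  define x where "x = (\<Sum>c\<in>C. real (internal_edges (E - E') c)) - (\<Sum>c\<in>C. real (internal_edges (E' - E) c))"
  define y where "y = (\<Sum>c\<in>C. real (volume (E - E') c) * w c) - (\<Sum>c\<in>C. real (volume (E' - E) c) * w c)"
  have diff: "modularity E C - modularity E' C = x / m - y / (4 * m^2)"
    unfolding modularity_diff_eq[OF fin same_card] x_def y_def w_def m_def
    by (simp only: sum_subtractf sum_divide_distrib[symmetric] left_diff_distrib)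
  have x: "\<bar>x\<bar> \<le> r"
    using sum_internal_edges_partition_le[OF V R(1)] sum_internal_edges_partition_le[OF V R(2)]
    unfolding x_def r_def r' by (simp flip: of_nat_sum)
  have y: "\<bar>y\<bar> \<le> 2 * r * (4 * m)"
    using sum_volume_weighted_le[OF V R(1) w] sum_volume_weighted_le[OF V R(2) w]
    unfolding y_def r_def r' abs_le_iff by linarith
  have "m \<ge> 0" unfolding m_def by simp
  then have "\<bar>x / m - y / (4 * m^2)\<bar> \<le> \<bar>x\<bar> / m + \<bar>y\<bar> / (4 * m^2)"
    using abs_triangle_ineq4[of "x / m" "y / (4 * m^2)"] by (simp add: abs_divide)
  also have "\<dots> \<le> r / m + 2 * r * (4 * m) / (4 * m^2)"
    using x y \<open>m \<ge> 0\<close> by (intro add_mono divide_right_mono) simp_all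
  also have "\<dots> = 3 * real r / m" by (cases "m = 0") (simp_all add: power2_eq_square field_simps)
  also have "\<dots> \<le> 3 * real t / m" using t \<open>m \<ge> 0\<close> unfolding r_def by (simp add: divide_right_mono)
  finally show ?thesis unfolding diff m_def .
qed

lemma aux_edges_eq_top_ranked:
  "aux_edges V k rk X = top_ranked (pair_sim k X) rk (pairs V) (aux_size (card V))"
  unfolding aux_edges_def top_ranked_def rank_def outranks_def ..

lemma aux_size_le_choose_two: "aux_size n \<le> n choose 2"
proof -
  have "even (n * (n - 1))" by (cases "even n") auto
  then have "real (n * (n - 1)) / 20 \<le> real (n * (n - 1) div 2)"
    by (simp add: real_of_nat_div)
  then show ?thesis unfolding aux_size_def choose_two by linarith
qed

lemma aux_size_ge: "real (n * (n - 1)) / 20 \<le> real (aux_size n)"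
  unfolding aux_size_def by linarith

lemma card_aux_edges:
  assumes "finite V" "inj_on rk (pairs V)"
  shows "card (aux_edges V k rk X) = aux_size (card V)"
  unfolding aux_edges_eq_top_ranked
  by (rule card_top_ranked[OF finite_pairs[OF assms(1)] assms(2)])
    (simp add: card_pairs[OF assms(1)] aux_size_le_choose_two)

text \<open>The SOME choices in pair_sim stay inside e because e has two elements.\<close>
lemma pair_sim_cong:
  assumes "card e = 2" "\<forall>u\<in>e. X' u = X u"
  shows "pair_sim k X' e = pair_sim k X e"
proof -
  obtain a b where ab: "e = {a, b}" "a \<noteq> b" using assms(1) card_2_iff by metis
  define u where "u = (SOME u. u \<in> e)"
  define w where "w = (SOME w. w \<in> e \<and> w \<noteq> u)"
  have u: "u \<in> e" unfolding u_def using ab by (metis insertI1 someI)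
  then have "\<exists>w. w \<in> e \<and> w \<noteq> u" using ab by auto
  then have w: "w \<in> e" unfolding w_def by (metis (mono_tags, lifting) someI_ex)
  have "cos_sim k X' u w = cos_sim k X u w"
    unfolding cos_sim_def using assms(2) u w by simp
  then show ?thesis unfolding pair_sim_def Let_def u_def w_def .
qed

lemma card_aux_edges_diff_le:
  assumes "finite V" "inj_on rk (pairs V)" "v \<in> V" "\<forall>u. u \<noteq> v \<longrightarrow> X' u = X u"
  shows "card (aux_edges V k rk X - aux_edges V k rk X') \<le> card V - 1"
proof -
  have agree: "\<forall>e \<in> pairs V - {e. v \<in> e}. pair_sim k X' e = pair_sim k X e"
  proof
    fix e assume "e \<in> pairs V - {e. v \<in> e}"
    then have "card e = 2" "\<forall>u\<in>e. X' u = X u" using assms(4) unfolding pairs_def by auto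
    then show "pair_sim k X' e = pair_sim k X e" by (rule pair_sim_cong)
  qed
  have "aux_size (card V) \<le> card (pairs V)"
    using card_pairs[OF assms(1)] aux_size_le_choose_two by simp
  then have "card (aux_edges V k rk X - aux_edges V k rk X') \<le> card (pairs V \<inter> {e. v \<in> e})"
    unfolding aux_edges_eq_top_ranked
    by (rule card_top_ranked_diff_le[OF finite_pairs[OF assms(1)] assms(2) _ agree])
  also have "pairs V \<inter> {e. v \<in> e} = {e \<in> pairs V. v \<in> e}" by blast
  also have "card \<dots> \<le> card V - 1" by (rule card_pairs_containing_le[OF assms(1,3)])
  finally show ?thesis .
qed

lemma div_aux_size_le:
  assumes "2 \<le> n"
  shows "3 * real (n - 1) / real (aux_size n) \<le> 60 / real n"
proof -
  have h: "real n * real (n - 1) \<le> 20 * real (aux_size n)" using aux_size_ge[of n] by simp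
  have pos: "0 < real n" "0 < real (n - 1)" using assms by auto
  then have "0 < real (aux_size n)" using h mult_pos_pos[OF pos] by linarith
  then show ?thesis using h pos by (simp add: divide_simps) (simp add: algebra_simps)
qed

lemma modularity_aux_edges_diff_le:
  assumes "finite V" "card V \<ge> 2" "inj_on rk (pairs V)" "partition_on V C"
    and "v \<in> V" "\<forall>u. u \<noteq> v \<longrightarrow> X' u = X u"
  shows "\<bar>modularity (aux_edges V k rk X) C - modularity (aux_edges V k rk X') C\<bar> \<le> 60 / real (card V)"
proof -
  have sub: "aux_edges V k rk Y \<subseteq> pairs V" for Y unfolding aux_edges_def by blast
  note card = card_aux_edges[OF assms(1,3)]
  have "\<bar>modularity (aux_edges V k rk X) C - modularity (aux_edges V k rk X') C\<bar>
      \<le> 3 * real (card V - 1) / real (aux_size (card V))"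
    using modularity_diff_le[OF assms(1,4) sub sub _ card_aux_edges_diff_le[OF assms(1,3,5,6)]]
    unfolding card by simp
  also have "\<dots> \<le> 60 / real (card V)" by (rule div_aux_size_le[OF assms(2)])
  finally show ?thesis .
qed

lemma ex_neighbouring:
  assumes "card V \<ge> 2" "attr_graph V k E X"
  shows "\<exists>G'. neighbouring V k (E, X) G'"
proof -
  have "finite V" using assms(1) card.infinite by fastforce
  then have "pairs V \<noteq> {}" using card_pairs assms(1) by fastforce
  then obtain e where e: "e \<in> pairs V" by blast
  define E' where "E' = (if e \<in> E then E - {e} else insert e E)"
  have "(E - E') \<union> (E' - E) = {e}" unfolding E'_def by auto
  moreover have "attr_graph V k E' X" using assms(2) e unfolding attr_graph_def E'_def by auto
  ultimately have "neighbouring V k (E, X) (E', X)"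
    unfolding neighbouring_def using assms(2) by simp
  then show ?thesis ..
qed

theorem proposition1:
  fixes V :: "'v set" and n k :: nat and rk :: "'v set \<Rightarrow> nat" and C :: "'v set set"
    and E :: "'v set set" and X :: "'v \<Rightarrow> nat \<Rightarrow> bool"
  assumes "finite V" and "card V = n" and "n \<ge> 2"
    and "inj_on rk (pairs V)"
    and "partition_on V C"
    and "attr_graph V k E X"
  shows "local_sensitivity (Q_aux V k rk C) (neighbouring V k) (E, X) \<le> 60 / real n"
  unfolding local_sensitivity_def
proof (rule cSup_least)
  show "{\<bar>Q_aux V k rk C (E, X) - Q_aux V k rk C G'\<bar> | G'. neighbouring V k (E, X) G'} \<noteq> {}"
    using ex_neighbouring[of V k E X] assms(2,3,6) by auto
next
  fix d assume "d \<in> {\<bar>Q_aux V k rk C (E, X) - Q_aux V k rk C G'\<bar> | G'. neighbouring V k (E, X) G'}"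
  then obtain E' X' where nb: "neighbouring V k (E, X) (E', X')"
    and d: "d = \<bar>modularity (aux_edges V k rk X) C - modularity (aux_edges V k rk X') C\<bar>"
    unfolding Q_aux_def by auto
  text \<open>Q_aux ignores the edges of G, so only a change of attributes can move it.\<close>
  from nb consider "X' = X" | v where "v \<in> V" "\<forall>u. u \<noteq> v \<longrightarrow> X' u = X u"
    unfolding neighbouring_def by auto
  then show "d \<le> 60 / real n"
  proof cases
    case 1
    then show ?thesis using d by simp
  next
    case 2
    then show ?thesis using d modularity_aux_edges_diff_le[OF assms(1) _ assms(4,5)] assms(2,3) by simp
  qed
qed

end
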